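(* Let $\mathbb{C}$ be a partial category. Then the family $\mathscr{N}$ of all morphisms $\mathrm{id}_A{\downarrow}U:U\to A$, for objects $U\le A$, is an inclusion system on $\mathbb{C}$.
   Context: Composition is diagrammatic. A partial category is a category with a partial order $\le$ on objects, a restriction operator $(U\le A,\ f:A\to B)\mapsto f{\downarrow}U:U\to B$, and a contraction operator $(V\le B,\ f:A\to B)\mapsto$ an object $A{\uparrow}_fV\le A$ and a morphism $f{\uparrow}V:A{\uparrow}_fV\to V$, satisfying: (P.1) $f{\downarrow}A=f$; (P.2) $(f{\downarrow}U){\downarrow}V=f{\downarrow}V$ for $V\le U\le A$; (P.3) $(f{\downarrow}U)g=(fg){\downarrow}U$; (P.4) $A{\uparrow}_fB=A$, $f{\uparrow}B=f$; (P.4') $A{\uparrow}_{\mathrm{id}_A}U=U$, $\mathrm{id}_A{\uparrow}U=\mathrm{id}_U$ for $U\le A$; (P.5) for $W\le V\le B$: $(A{\uparrow}_fV){\uparrow}_{f{\uparrow}V}W=A{\uparrow}_fW$ and $(f{\uparrow}V){\uparrow}W=f{\uparrow}W$; (P.6) for $g:B\to C$, $W\le C$: $A{\uparrow}_f(B{\uparrow}_gW)=A{\uparrow}_{fg}W$ and $(f{\uparrow}(B{\uparrow}_gW))(g{\uparrow}W)=(fg){\uparrow}W$; (P.7) $(A{\uparrow}_fV){\uparrow}_{f{\downarrow}(A{\uparrow}_fV)}V=A{\uparrow}_fV$ and $(f{\downarrow}(A{\uparrow}_fV)){\uparrow}V=f{\uparrow}V$; (P.8) $(fg){\downarrow}(A{\uparrow}_fV)=(f{\uparrow}V)(g{\downarrow}V)$.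 An inclusion system on a category is a family $\mathscr{N}$ of morphisms such that (I.1) identities belong to $\mathscr{N}$; (I.2) every member of $\mathscr{N}$ is monic; (I.3) any two parallel members of $\mathscr{N}$ are equal; (I.4) $\mathscr{N}$ is closed under composition; (I.5) for every $m:A\to B$ in $\mathscr{N}$ and every $f:C\to B$, a pullback of $m$ along $f$ exists and its leg $m':D\to C$ belongs to $\mathscr{N}$. *)

theory Defs
  imports Main
begin

text \<open>A (small) category presented by its object set, arrow set, domain,
codomain, identities and a composition written diagrammatically:
cmp f g is "first f, then g", defined when cod f = dom g.\<close>

record ('o, 'm) cat =
  Ob  :: "'o set"
  Ar  :: "'m set"
  Dom :: "'m \<Rightarrow> 'o"
  Cod :: "'m \<Rightarrow> 'o"
  Cmp :: "'m \<Rightarrow> 'm \<Rightarrow> 'm"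
  Id  :: "'o \<Rightarrow> 'm"

definition hom :: "('o, 'm, 'x) cat_scheme \<Rightarrow> 'o \<Rightarrow> 'o \<Rightarrow> 'm set" where
  "hom C A B = {f \<in> Ar C. Dom C f = A \<and> Cod C f = B}"

definition category :: "('o, 'm, 'x) cat_scheme \<Rightarrow> bool" where
  "category C \<longleftrightarrow>
     (\<forall>f\<in>Ar C. Dom C f \<in> Ob C \<and> Cod C f \<in> Ob C)
   \<and> (\<forall>A\<in>Ob C. Id C A \<in> hom C A A)
   \<and> (\<forall>f\<in>Ar C. \<forall>g\<in>Ar C. Cod C f = Dom C g \<longrightarrow> Cmp C f g \<in> hom C (Dom C f) (Cod C g))
   \<and> (\<forall>f\<in>Ar C. Cmp C (Id C (Dom C f)) f = f \<and> Cmp C f (Id C (Cod C f)) = f)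
   \<and> (\<forall>f\<in>Ar C. \<forall>g\<in>Ar C. \<forall>h\<in>Ar C. Cod C f = Dom C g \<longrightarrow> Cod C g = Dom C h \<longrightarrow>
        Cmp C (Cmp C f g) h = Cmp C f (Cmp C g h))"

text \<open>Partial category: order Le on objects, restriction Res f U = f restricted to U,
contraction object CObj f V = A contracted along f to V, contraction morphism CMor f V = f contracted to V.\<close>

record ('o, 'm) pcat = "('o, 'm) cat" +
  Le   :: "'o \<Rightarrow> 'o \<Rightarrow> bool"
  Res  :: "'m \<Rightarrow> 'o \<Rightarrow> 'm"
  CObj :: "'m \<Rightarrow> 'o \<Rightarrow> 'o"
  CMor :: "'m \<Rightarrow> 'o \<Rightarrow> 'm"

definition partial_category :: "('o, 'm, 'x) pcat_scheme \<Rightarrow> bool" where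
  "partial_category C \<longleftrightarrow> category C
   \<comment> \<open>partial order on objects\<close>
   \<and> (\<forall>A\<in>Ob C. Le C A A)
   \<and> (\<forall>A\<in>Ob C. \<forall>B\<in>Ob C. Le C A B \<and> Le C B A \<longrightarrow> A = B)
   \<and> (\<forall>A\<in>Ob C. \<forall>B\<in>Ob C. \<forall>D\<in>Ob C. Le C A B \<and> Le C B D \<longrightarrow> Le C A D)
   \<comment> \<open>typing of restriction\<close>
   \<and> (\<forall>A\<in>Ob C. \<forall>B\<in>Ob C. \<forall>U\<in>Ob C. \<forall>f\<in>hom C A B. Le C U A \<longrightarrow> Res C f U \<in> hom C U B)
   \<comment> \<open>typing of contraction\<close>
   \<and> (\<forall>A\<in>Ob C. \<forall>B\<in>Ob C. \<forall>V\<in>Ob C. \<forall>f\<in>hom C A B. Le C V B \<longrightarrow>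
        CObj C f V \<in> Ob C \<and> Le C (CObj C f V) A \<and> CMor C f V \<in> hom C (CObj C f V) V)
   \<comment> \<open>P.1\<close>
   \<and> (\<forall>A\<in>Ob C. \<forall>B\<in>Ob C. \<forall>f\<in>hom C A B. Res C f A = f)
   \<comment> \<open>P.2\<close>
   \<and> (\<forall>A\<in>Ob C. \<forall>B\<in>Ob C. \<forall>U\<in>Ob C. \<forall>V\<in>Ob C. \<forall>f\<in>hom C A B.
        Le C V U \<and> Le C U A \<longrightarrow> Res C (Res C f U) V = Res C f V)
   \<comment> \<open>P.3\<close>
   \<and> (\<forall>A\<in>Ob C. \<forall>B\<in>Ob C. \<forall>D\<in>Ob C. \<forall>U\<in>Ob C. \<forall>f\<in>hom C A B. \<forall>g\<in>hom C B D.
        Le C U A \<longrightarrow> Cmp C (Res C f U) g = Res C (Cmp C f g) U)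
   \<comment> \<open>P.4\<close>
   \<and> (\<forall>A\<in>Ob C. \<forall>B\<in>Ob C. \<forall>f\<in>hom C A B. CObj C f B = A \<and> CMor C f B = f)
   \<comment> \<open>P.4'\<close>
   \<and> (\<forall>A\<in>Ob C. \<forall>U\<in>Ob C. Le C U A \<longrightarrow>
        CObj C (Id C A) U = U \<and> CMor C (Id C A) U = Id C U)
   \<comment> \<open>P.5\<close>
   \<and> (\<forall>A\<in>Ob C. \<forall>B\<in>Ob C. \<forall>V\<in>Ob C. \<forall>W\<in>Ob C. \<forall>f\<in>hom C A B.
        Le C W V \<and> Le C V B \<longrightarrow>
          CObj C (CMor C f V) W = CObj C f W \<and> CMor C (CMor C f V) W = CMor C f W)
   \<comment> \<open>P.6\<close>
   \<and> (\<forall>A\<in>Ob C. \<forall>B\<in>Ob C. \<forall>D\<in>Ob C. \<forall>W\<in>Ob C. \<forall>f\<in>hom C A B. \<forall>g\<in>hom C B D.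
        Le C W D \<longrightarrow>
          CObj C f (CObj C g W) = CObj C (Cmp C f g) W
        \<and> Cmp C (CMor C f (CObj C g W)) (CMor C g W) = CMor C (Cmp C f g) W)
   \<comment> \<open>P.7\<close>
   \<and> (\<forall>A\<in>Ob C. \<forall>B\<in>Ob C. \<forall>V\<in>Ob C. \<forall>f\<in>hom C A B. Le C V B \<longrightarrow>
          CObj C (Res C f (CObj C f V)) V = CObj C f V
        \<and> CMor C (Res C f (CObj C f V)) V = CMor C f V)
   \<comment> \<open>P.8\<close>
   \<and> (\<forall>A\<in>Ob C. \<forall>B\<in>Ob C. \<forall>D\<in>Ob C. \<forall>V\<in>Ob C. \<forall>f\<in>hom C A B. \<forall>g\<in>hom C B D.
        Le C V B \<longrightarrow>
          Res C (Cmp C f g) (CObj C f V) = Cmp C (CMor C f V) (Res C g V))"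

definition monic :: "('o, 'm, 'x) cat_scheme \<Rightarrow> 'm \<Rightarrow> bool" where
  "monic C m \<longleftrightarrow> (\<forall>g\<in>Ar C. \<forall>h\<in>Ar C.
      Cod C g = Dom C m \<and> Cod C h = Dom C m \<and> Dom C g = Dom C h \<and> Cmp C g m = Cmp C h m
      \<longrightarrow> g = h)"

definition is_pullback ::
  "('o, 'm, 'x) cat_scheme \<Rightarrow> 'm \<Rightarrow> 'm \<Rightarrow> 'm \<Rightarrow> 'm \<Rightarrow> bool" where
  "is_pullback C m f m' f' \<longleftrightarrow>
     m \<in> Ar C \<and> f \<in> Ar C \<and> m' \<in> Ar C \<and> f' \<in> Ar C
   \<and> Cod C f = Cod C m \<and> Dom C m' = Dom C f' \<and> Cod C m' = Dom C f \<and> Cod C f' = Dom C m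
   \<and> Cmp C m' f = Cmp C f' m
   \<and> (\<forall>p\<in>Ar C. \<forall>q\<in>Ar C. Dom C p = Dom C q \<and> Cod C p = Dom C f \<and> Cod C q = Dom C m
        \<and> Cmp C p f = Cmp C q m \<longrightarrow>
        (\<exists>!u. u \<in> hom C (Dom C p) (Dom C m') \<and> Cmp C u m' = p \<and> Cmp C u f' = q))"

definition inclusion_system :: "('o, 'm, 'x) cat_scheme \<Rightarrow> 'm set \<Rightarrow> bool" where
  "inclusion_system C N \<longleftrightarrow> N \<subseteq> Ar C
   \<and> (\<forall>A\<in>Ob C. Id C A \<in> N)
   \<and> (\<forall>m\<in>N. monic C m)
   \<and> (\<forall>m\<in>N. \<forall>n\<in>N. Dom C m = Dom C n \<and> Cod C m = Cod C n \<longrightarrow> m = n)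
   \<and> (\<forall>m\<in>N. \<forall>n\<in>N. Cod C m = Dom C n \<longrightarrow> Cmp C m n \<in> N)
   \<and> (\<forall>m\<in>N. \<forall>f\<in>Ar C. Cod C f = Cod C m \<longrightarrow>
        (\<exists>m' f'. is_pullback C m f m' f' \<and> m' \<in> N))"

end

theory Submission
  imports Defs
begin

text \<open>Restricting an identity gives the inclusion of U into A. Contracting along such an
inclusion recovers every morphism into U, that is (g ; incl A U)\<up>U = g by P.4, P.4', P.6 and
P.7; this cancellation law makes inclusions monic. The pullback of incl A U along f : X \<rightarrow> A
is the inclusion of X\<up>f U into X together with f\<up>U (the square commutes by P.3 and P.8).
The mediating arrow for a cone (p, q) is p\<up>(X\<up>f U): P.6 and the cancellation law show
that it is well typed and factors q, P.8 and P.1 that it factors p, and it is unique because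
inclusions are monic.\<close>

abbreviation incl :: "('o, 'm, 'x) pcat_scheme \<Rightarrow> 'o \<Rightarrow> 'o \<Rightarrow> 'm" where
  "incl C A U \<equiv> Res C (Id C A) U"

locale small_category =
  fixes C :: "('o, 'm, 'x) cat_scheme"
  assumes category: "category C"
begin

lemma hom_obs: "f \<in> hom C A B \<Longrightarrow> A \<in> Ob C \<and> B \<in> Ob C"
  using category unfolding category_def hom_def by auto

lemma in_hom_dom_cod: "f \<in> Ar C \<Longrightarrow> f \<in> hom C (Dom C f) (Cod C f)"
  unfolding hom_def by simp

lemma id_hom: "A \<in> Ob C \<Longrightarrow> Id C A \<in> hom C A A"
  using category unfolding category_def by blast

lemma comp_id_left: "f \<in> hom C A B \<Longrightarrow> Cmp C (Id C A) f = f"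
  using category unfolding category_def hom_def by auto

lemma comp_id_right: "f \<in> hom C A B \<Longrightarrow> Cmp C f (Id C B) = f"
  using category unfolding category_def hom_def by auto

end

locale partial_cat =
  fixes C :: "('o, 'm, 'x) pcat_scheme"
  assumes partial_category: "partial_category C"

sublocale partial_cat \<subseteq> small_category C
  using partial_category unfolding partial_category_def by unfold_locales (elim conjE)

context partial_cat
begin

text \<open>Each axiom is extracted verbatim from the definition before it is used: blast does not
find the right clause of the whole definition in reasonable time.\<close>

lemma le_refl: "A \<in> Ob C \<Longrightarrow> Le C A A"
proof -
  have "\<forall>A\<in>Ob C. Le C A A"
    using partial_category unfolding partial_category_def by (elim conjE)
  then show "A \<in> Ob C \<Longrightarrow> Le C A A" by blast
qed

lemma le_trans:
  assumes "A \<in> Ob C" "B \<in> Ob C" "D \<in> Ob C" "Le C A B" "Le C B D"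
  shows "Le C A D"
proof -
  have "\<forall>A\<in>Ob C. \<forall>B\<in>Ob C. \<forall>D\<in>Ob C. Le C A B \<and> Le C B D \<longrightarrow> Le C A D"
    using partial_category unfolding partial_category_def by (elim conjE)
  then show ?thesis using assms by blast
qed

lemma res_hom:
  assumes "f \<in> hom C A B" "U \<in> Ob C" "Le C U A"
  shows "Res C f U \<in> hom C U B"
proof -
  have "\<forall>A\<in>Ob C. \<forall>B\<in>Ob C. \<forall>U\<in>Ob C. \<forall>f\<in>hom C A B. Le C U A \<longrightarrow> Res C f U \<in> hom C U B"
    using partial_category unfolding partial_category_def by (elim conjE)
  then show ?thesis using assms hom_obs[OF assms(1)] by blast
qed

lemma contract_hom:
  assumes "f \<in> hom C A B" "V \<in> Ob C" "Le C V B"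
  shows "CObj C f V \<in> Ob C \<and> Le C (CObj C f V) A \<and> CMor C f V \<in> hom C (CObj C f V) V"
proof -
  have "\<forall>A\<in>Ob C. \<forall>B\<in>Ob C. \<forall>V\<in>Ob C. \<forall>f\<in>hom C A B. Le C V B \<longrightarrow>
        CObj C f V \<in> Ob C \<and> Le C (CObj C f V) A \<and> CMor C f V \<in> hom C (CObj C f V) V"
    using partial_category unfolding partial_category_def by (elim conjE)
  then show ?thesis using assms hom_obs[OF assms(1)] by blast
qed

lemma res_self:
  assumes "f \<in> hom C A B"
  shows "Res C f A = f"
proof -
  have "\<forall>A\<in>Ob C. \<forall>B\<in>Ob C. \<forall>f\<in>hom C A B. Res C f A = f"
    using partial_category unfolding partial_category_def by (elim conjE)
  then show ?thesis using assms hom_obs[OF assms(1)] by blast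
qed

lemma res_res:
  assumes "f \<in> hom C A B" "U \<in> Ob C" "V \<in> Ob C" "Le C V U" "Le C U A"
  shows "Res C (Res C f U) V = Res C f V"
proof -
  have "\<forall>A\<in>Ob C. \<forall>B\<in>Ob C. \<forall>U\<in>Ob C. \<forall>V\<in>Ob C. \<forall>f\<in>hom C A B.
        Le C V U \<and> Le C U A \<longrightarrow> Res C (Res C f U) V = Res C f V"
    using partial_category unfolding partial_category_def by (elim conjE)
  then show ?thesis using assms hom_obs[OF assms(1)] by blast
qed

lemma comp_res:
  assumes "f \<in> hom C A B" "g \<in> hom C B D" "U \<in> Ob C" "Le C U A"
  shows "Cmp C (Res C f U) g = Res C (Cmp C f g) U"
proof -
  have "\<forall>A\<in>Ob C. \<forall>B\<in>Ob C. \<forall>D\<in>Ob C. \<forall>U\<in>Ob C. \<forall>f\<in>hom C A B. \<forall>g\<in>hom C B D.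
        Le C U A \<longrightarrow> Cmp C (Res C f U) g = Res C (Cmp C f g) U"
    using partial_category unfolding partial_category_def by (elim conjE)
  then show ?thesis using assms hom_obs[OF assms(1)] hom_obs[OF assms(2)] by blast
qed

lemma contract_cod:
  assumes "f \<in> hom C A B"
  shows "CObj C f B = A \<and> CMor C f B = f"
proof -
  have "\<forall>A\<in>Ob C. \<forall>B\<in>Ob C. \<forall>f\<in>hom C A B. CObj C f B = A \<and> CMor C f B = f"
    using partial_category unfolding partial_category_def by (elim conjE)
  then show ?thesis using assms hom_obs[OF assms(1)] by blast
qed

lemma contract_id:
  assumes "A \<in> Ob C" "U \<in> Ob C" "Le C U A"
  shows "CObj C (Id C A) U = U \<and> CMor C (Id C A) U = Id C U"
proof -
  have "\<forall>A\<in>Ob C. \<forall>U\<in>Ob C. Le C U A \<longrightarrow> CObj C (Id C A) U = U \<and> CMor C (Id C A) U = Id C U"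
    using partial_category unfolding partial_category_def by (elim conjE)
  then show ?thesis using assms by blast
qed

lemma contract_comp:
  assumes "f \<in> hom C A B" "g \<in> hom C B D" "W \<in> Ob C" "Le C W D"
  shows "CObj C f (CObj C g W) = CObj C (Cmp C f g) W
    \<and> Cmp C (CMor C f (CObj C g W)) (CMor C g W) = CMor C (Cmp C f g) W"
proof -
  have "\<forall>A\<in>Ob C. \<forall>B\<in>Ob C. \<forall>D\<in>Ob C. \<forall>W\<in>Ob C. \<forall>f\<in>hom C A B. \<forall>g\<in>hom C B D.
        Le C W D \<longrightarrow>
          CObj C f (CObj C g W) = CObj C (Cmp C f g) W
        \<and> Cmp C (CMor C f (CObj C g W)) (CMor C g W) = CMor C (Cmp C f g) W"
    using partial_category unfolding partial_category_def by (elim conjE)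
  then show ?thesis using assms hom_obs[OF assms(1)] hom_obs[OF assms(2)] by blast
qed

lemma contract_res_contract:
  assumes "f \<in> hom C A B" "V \<in> Ob C" "Le C V B"
  shows "CObj C (Res C f (CObj C f V)) V = CObj C f V \<and> CMor C (Res C f (CObj C f V)) V = CMor C f V"
proof -
  have "\<forall>A\<in>Ob C. \<forall>B\<in>Ob C. \<forall>V\<in>Ob C. \<forall>f\<in>hom C A B. Le C V B \<longrightarrow>
          CObj C (Res C f (CObj C f V)) V = CObj C f V
        \<and> CMor C (Res C f (CObj C f V)) V = CMor C f V"
    using partial_category unfolding partial_category_def by (elim conjE)
  then show ?thesis using assms hom_obs[OF assms(1)] by blast
qed

lemma res_comp_contract:
  assumes "f \<in> hom C A B" "g \<in> hom C B D" "V \<in> Ob C" "Le C V B"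
  shows "Res C (Cmp C f g) (CObj C f V) = Cmp C (CMor C f V) (Res C g V)"
proof -
  have "\<forall>A\<in>Ob C. \<forall>B\<in>Ob C. \<forall>D\<in>Ob C. \<forall>V\<in>Ob C. \<forall>f\<in>hom C A B. \<forall>g\<in>hom C B D.
        Le C V B \<longrightarrow> Res C (Cmp C f g) (CObj C f V) = Cmp C (CMor C f V) (Res C g V)"
    using partial_category unfolding partial_category_def by (elim conjE)
  then show ?thesis using assms hom_obs[OF assms(1)] hom_obs[OF assms(2)] by blast
qed

lemma incl_hom: "A \<in> Ob C \<Longrightarrow> U \<in> Ob C \<Longrightarrow> Le C U A \<Longrightarrow> incl C A U \<in> hom C U A"
  using res_hom id_hom by blast

lemma incl_dom_cod:
  "A \<in> Ob C \<Longrightarrow> U \<in> Ob C \<Longrightarrow> Le C U A \<Longrightarrow> Dom C (incl C A U) = U \<and> Cod C (incl C A U) = A"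
  using incl_hom unfolding hom_def by blast

lemma incl_self: "A \<in> Ob C \<Longrightarrow> incl C A A = Id C A"
  using res_self id_hom by blast

lemma contract_incl:
  assumes "A \<in> Ob C" "U \<in> Ob C" "Le C U A"
  shows "CObj C (incl C A U) U = U \<and> CMor C (incl C A U) U = Id C U"
  using contract_res_contract[OF id_hom[OF assms(1)] assms(2,3)] contract_id[OF assms] by simp

lemma contract_comp_incl:
  assumes "A \<in> Ob C" "U \<in> Ob C" "Le C U A" "g \<in> hom C X U"
  shows "CObj C (Cmp C g (incl C A U)) U = X \<and> CMor C (Cmp C g (incl C A U)) U = g"
  using contract_comp[OF assms(4) incl_hom[OF assms(1-3)] assms(2,3)]
    contract_incl[OF assms(1-3)] contract_cod[OF assms(4)] comp_id_right[OF assms(4)]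
  by simp

lemma incl_monic:
  assumes "A \<in> Ob C" "U \<in> Ob C" "Le C U A"
  shows "monic C (incl C A U)"
  unfolding monic_def
proof (intro ballI impI)
  fix g h
  assume "g \<in> Ar C" "h \<in> Ar C" and eqs: "Cod C g = Dom C (incl C A U) \<and> Cod C h = Dom C (incl C A U)
    \<and> Dom C g = Dom C h \<and> Cmp C g (incl C A U) = Cmp C h (incl C A U)"
  moreover have "Dom C (incl C A U) = U"
    using incl_dom_cod[OF assms] by simp
  ultimately have "g \<in> hom C (Dom C g) U" "h \<in> hom C (Dom C g) U"
    unfolding hom_def by auto
  then show "g = h"
    using contract_comp_incl[OF assms] eqs by metis
qed

lemma incl_comp_incl:
  assumes "B \<in> Ob C" "A \<in> Ob C" "U \<in> Ob C" "Le C A B" "Le C U A"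
  shows "Cmp C (incl C A U) (incl C B A) = incl C B U"
proof -
  have BA: "incl C B A \<in> hom C A B"
    using incl_hom assms by blast
  have "Cmp C (incl C A U) (incl C B A) = Res C (Cmp C (Id C A) (incl C B A)) U"
    using comp_res[OF id_hom BA] assms by blast
  also have "\<dots> = Res C (incl C B A) U"
    using comp_id_left[OF BA] by simp
  also have "\<dots> = incl C B U"
    using res_res[OF id_hom] assms by blast
  finally show ?thesis .
qed

lemma incl_pullback_square:
  assumes "A \<in> Ob C" "U \<in> Ob C" "Le C U A" "f \<in> hom C X A"
  shows "Cmp C (incl C X (CObj C f U)) f = Cmp C (CMor C f U) (incl C A U)"
proof -
  have X: "X \<in> Ob C" and D: "CObj C f U \<in> Ob C" "Le C (CObj C f U) X"
    using hom_obs[OF assms(4)] contract_hom[OF assms(4,2,3)] by auto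
  have "Cmp C (incl C X (CObj C f U)) f = Res C (Cmp C (Id C X) f) (CObj C f U)"
    using comp_res[OF id_hom[OF X] assms(4) D] .
  also have "\<dots> = Res C (Cmp C f (Id C A)) (CObj C f U)"
    using comp_id_left[OF assms(4)] comp_id_right[OF assms(4)] by simp
  also have "\<dots> = Cmp C (CMor C f U) (incl C A U)"
    using res_comp_contract[OF assms(4) id_hom[OF assms(1)] assms(2,3)] .
  finally show ?thesis .
qed

lemma incl_pullback_factor:
  assumes A: "A \<in> Ob C" and U: "U \<in> Ob C" and UA: "Le C U A" and f: "f \<in> hom C X A"
    and p: "p \<in> hom C Y X" and q: "q \<in> hom C Y U"
    and cone: "Cmp C p f = Cmp C q (incl C A U)"
  defines "D \<equiv> CObj C f U"
  shows "CMor C p D \<in> hom C Y D"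
    and "Cmp C (CMor C p D) (incl C X D) = p"
    and "Cmp C (CMor C p D) (CMor C f U) = q"
proof -
  have X: "X \<in> Ob C" and D: "D \<in> Ob C" "Le C D X"
    using hom_obs[OF f] contract_hom[OF f U UA] unfolding D_def by auto
  have dom: "CObj C p D = Y"
    using contract_comp[OF p f U UA] cone contract_comp_incl[OF A U UA q]
    unfolding D_def by simp
  show "CMor C p D \<in> hom C Y D"
    using contract_hom[OF p D] dom by simp
  have "Cmp C (CMor C p D) (incl C X D) = Res C (Cmp C p (Id C X)) Y"
    using res_comp_contract[OF p id_hom[OF X] D] dom by simp
  then show "Cmp C (CMor C p D) (incl C X D) = p"
    using comp_id_right[OF p] res_self[OF p] by simp
  show "Cmp C (CMor C p D) (CMor C f U) = q"
    using contract_comp[OF p f U UA] cone contract_comp_incl[OF A U UA q]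
    unfolding D_def by simp
qed

lemma incl_pullback:
  assumes A: "A \<in> Ob C" and U: "U \<in> Ob C" and UA: "Le C U A" and f: "f \<in> hom C X A"
  shows "is_pullback C (incl C A U) f (incl C X (CObj C f U)) (CMor C f U)"
proof -
  define D where "D = CObj C f U"
  have X: "X \<in> Ob C" and D: "D \<in> Ob C" "Le C D X" and f': "CMor C f U \<in> hom C D U"
    using hom_obs[OF f] contract_hom[OF f U UA] unfolding D_def by auto
  have m: "incl C A U \<in> hom C U A" and m': "incl C X D \<in> hom C D X"
    using incl_hom[OF A U UA] incl_hom[OF X D] by auto
  have universal: "\<exists>!u. u \<in> hom C (Dom C p) (Dom C (incl C X D)) \<and> Cmp C u (incl C X D) = p
      \<and> Cmp C u (CMor C f U) = q"
    if "p \<in> Ar C" "q \<in> Ar C" and cone: "Dom C p = Dom C q \<and> Cod C p = Dom C f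
      \<and> Cod C q = Dom C (incl C A U) \<and> Cmp C p f = Cmp C q (incl C A U)" for p q
  proof (rule ex1I)
    have p: "p \<in> hom C (Dom C p) X" and q: "q \<in> hom C (Dom C p) U"
      using that f incl_dom_cod[OF A U UA] unfolding hom_def by auto
    show "CMor C p D \<in> hom C (Dom C p) (Dom C (incl C X D)) \<and> Cmp C (CMor C p D) (incl C X D) = p
        \<and> Cmp C (CMor C p D) (CMor C f U) = q"
      using incl_pullback_factor[OF A U UA f p q] cone incl_dom_cod[OF X D] unfolding D_def by simp
    show "v = CMor C p D"
      if "v \<in> hom C (Dom C p) (Dom C (incl C X D)) \<and> Cmp C v (incl C X D) = p
        \<and> Cmp C v (CMor C f U) = q" for v
      using that incl_monic[OF X D] incl_pullback_factor(1,2)[OF A U UA f p q] cone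
        incl_dom_cod[OF X D] unfolding monic_def hom_def D_def by auto
  qed
  show ?thesis
    unfolding is_pullback_def D_def[symmetric]
    using m m' f f' incl_pullback_square[OF A U UA f] universal
    unfolding hom_def D_def by auto
qed

abbreviation inclusions :: "'m set" where
  "inclusions \<equiv> {incl C A U | A U. A \<in> Ob C \<and> U \<in> Ob C \<and> Le C U A}"

lemma inclusions_comp_closed:
  assumes "m \<in> inclusions" "n \<in> inclusions" "Cod C m = Dom C n"
  shows "Cmp C m n \<in> inclusions"
proof -
  obtain A U B V where m: "m = incl C A U" "A \<in> Ob C" "U \<in> Ob C" "Le C U A"
    and n: "n = incl C B V" "B \<in> Ob C" "V \<in> Ob C" "Le C V B"
    using assms(1,2) by blast
  moreover have "V = A"
    using assms(3) incl_dom_cod m n by metis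
  ultimately have "Cmp C m n = incl C B U" "Le C U B"
    using incl_comp_incl le_trans by blast+
  then show ?thesis
    using m n by blast
qed

lemma inclusions_pullback:
  assumes "m \<in> inclusions" "f \<in> Ar C" "Cod C f = Cod C m"
  shows "\<exists>m' f'. is_pullback C m f m' f' \<and> m' \<in> inclusions"
proof -
  obtain A U where m: "m = incl C A U" "A \<in> Ob C" "U \<in> Ob C" "Le C U A"
    using assms(1) by blast
  then have f: "f \<in> hom C (Dom C f) A"
    using in_hom_dom_cod[OF assms(2)] assms(3) incl_dom_cod by simp
  then have "incl C (Dom C f) (CObj C f U) \<in> inclusions"
    using contract_hom[OF f] hom_obs[OF f] m by blast
  then show ?thesis
    using incl_pullback[OF m(2-4) f] m(1) by blast
qed

end

theorem proposition11p12:
  assumes "partial_category C"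
  shows "inclusion_system C {Res C (Id C A) U | A U. A \<in> Ob C \<and> U \<in> Ob C \<and> Le C U A}"
  unfolding inclusion_system_def
proof (intro conjI ballI impI)
  interpret partial_cat C
    using assms by unfold_locales
  show "inclusions \<subseteq> Ar C"
    using incl_hom unfolding hom_def by blast
  show "Id C A \<in> inclusions" if "A \<in> Ob C" for A
    using incl_self[OF that] le_refl[OF that] that by force
  show "monic C m" if "m \<in> inclusions" for m
    using incl_monic that by blast
  show "m = n" if "m \<in> inclusions" "n \<in> inclusions" "Dom C m = Dom C n \<and> Cod C m = Cod C n"
    for m n
    using incl_dom_cod that by auto
  show "Cmp C m n \<in> inclusions" if "m \<in> inclusions" "n \<in> inclusions" "Cod C m = Dom C n" for m n
    using inclusions_comp_closed that .
  show "\<exists>m' f'. is_pullback C m f m' f' \<and> m' \<in> inclusions"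
    if "m \<in> inclusions" "f \<in> Ar C" "Cod C f = Cod C m" for m f
    using inclusions_pullback that .
qed

end
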